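(* Let $m\in\mathbb{N}=\{0,1,2,\dots\}$ and $a>-1$. Then $$\int_{0}^{\infty}\frac{dx}{(x^{4}+2ax^{2}+1)^{m+1}}=\frac{\pi}{2}\,\frac{P_{m}(a)}{[2(a+1)]^{m+1/2}},\qquad P_m(a)=\sum_{l=0}^{m}d_{l,m}a^{l},$$ where $$d_{l,m}=2^{-2m}\sum_{k=l}^{m}2^{k}\binom{2m-2k}{m-k}\binom{m+k}{m}\binom{k}{l},\qquad 0\le l\le m .$$ In particular each $d_{l,m}$ is a positive rational number, and for $m\ge 1$ one has $2^{2m-1}d_{l,m}\in\mathbb{Z}$. *)

theory Defs
  imports "HOL-Analysis.Analysis"
begin

definition d_coef :: "nat \<Rightarrow> nat \<Rightarrow> rat" where
  "d_coef l m = (1 / 2 ^ (2 * m)) *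
     (\<Sum>k = l..m. 2 ^ k * of_nat ((2 * m - 2 * k) choose (m - k))
                        * of_nat ((m + k) choose m) * of_nat (k choose l))"

definition P_poly :: "nat \<Rightarrow> real \<Rightarrow> real" where
  "P_poly m a = (\<Sum>l = 0..m. of_rat (d_coef l m) * a ^ l)"

end

theory Submission
  imports Defs
begin

(* Put c = 2(a+1) > 0, so that x^4 + 2ax^2 + 1 = x^2 ((x - 1/x)^2 + c).
   (1) An induction gives x^(2m+1) + x^-(2m+1) = (x + 1/x) S_m(x - 1/x) for the even
       polynomial S_m(t) = sum_k C(m+k,2k) t^(2k); hence f(x) + f(1/x)/x^2, where f is
       the integrand, equals (1 + 1/x^2) S_m(t) / (t^2 + c)^(m+1) with t = x - 1/x.
   (2) A general inversion principle: if G' = f(x) + f(1/x)/x^2 on (0,oo) and G -> L,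
       then the integral of f over [0,oo) is L - G(1).  Here G(x) = Phi(x - 1/x), where
       Phi is the primitive of S_m(t)/(t^2+c)^(m+1) obtained by t = sqrt c tan(theta):
       it turns the integral into one of a trigonometric polynomial over [0,pi/2].
   (3) The trigonometric integral is evaluated by the Wallis-type formula for
       int_0^(pi/2) sin^(2k) cos^(2l), and a binomial-theorem rearrangement identifies
       the result with (pi/2) P_m(a), after writing P_m in powers of 2(a+1).
   The positivity and integrality of d_{l,m} are elementary and are proved first. *)

section \<open>The coefficients \<open>d_coef\<close>\<close>

lemma d_coef_as_nat:
  "d_coef l m = of_nat (\<Sum>k = l..m. 2 ^ k * ((2 * m - 2 * k) choose (m - k))
                        * ((m + k) choose m) * (k choose l)) / 2 ^ (2 * m)"
  unfolding d_coef_def by simp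

text \<open>Every coefficient is positive: the summand with \<open>k = l\<close> is.\<close>

lemma d_coef_pos:
  assumes "l \<le> m"
  shows "d_coef l m > 0"
proof -
  have "(0::nat) < (\<Sum>k = l..m. 2 ^ k * ((2 * m - 2 * k) choose (m - k))
                              * ((m + k) choose m) * (k choose l))"
    using assms by (intro sum_pos2[of _ l]) (auto simp: zero_less_binomial)
  then show ?thesis
    unfolding d_coef_as_nat of_nat_0_less_iff[where 'a=rat, symmetric]
    by (rule divide_pos_pos) simp
qed

text \<open>The central binomial coefficient \<open>C(2m,m)\<close> is even for \<open>m \<ge> 1\<close>, since it is
  \<open>C(2m-1,m-1) + C(2m-1,m)\<close> with two equal summands.\<close>

lemma central_binomial_even:
  assumes "m \<ge> 1"
  shows "even ((2 * m) choose m)"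
proof -
  obtain n where n: "m = Suc n" using assms by (cases m) auto
  have "(2 * m) choose m = ((2*n+1) choose n) + ((2*n+1) choose Suc n)"
    using n binomial_Suc_Suc[of "2*n+1" n] by simp
  also have "(2*n+1) choose n = (2*n+1) choose Suc n"
    using binomial_symmetric[of n "2*n+1"] by (simp add: Suc_diff_le)
  finally show ?thesis by simp
qed

text \<open>For \<open>m \<ge> 1\<close> the numerator of \<open>d_coef l m\<close> is even: the summand \<open>k = 0\<close> contains
  \<open>C(2m,m)\<close>, and all others contain the factor \<open>2^k\<close>.\<close>

lemma d_coef_integral:
  assumes m: "m \<ge> 1"
  shows "2 ^ (2 * m - 1) * d_coef l m \<in> \<int>"
proof -
  define S where "S = (\<Sum>k = l..m. 2 ^ k * ((2 * m - 2 * k) choose (m - k))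
                                   * ((m + k) choose m) * (k choose l))"
  have "even S"
  proof (unfold S_def, intro dvd_sum)
    fix k
    show "2 dvd 2 ^ k * ((2 * m - 2 * k) choose (m - k)) * ((m + k) choose m) * (k choose l)"
      using central_binomial_even[OF m] by (cases "k = 0") auto
  qed
  then obtain N where N: "S = 2 * N" by blast
  have "(2::rat) ^ (2 * m) = 2 * 2 ^ (2 * m - 1)"
    using m by (simp add: power_Suc[symmetric] del: power_Suc)
  then have "2 ^ (2 * m - 1) * d_coef l m = of_nat N"
    unfolding d_coef_as_nat S_def[symmetric] N by simp
  then show ?thesis by simp
qed

text \<open>Summing over \<open>l\<close> with the binomial theorem expresses \<open>P_m\<close> in powers of
  \<open>2(a+1)\<close>; this is the form in which it arises from the integral.\<close>

lemma P_poly_shifted: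
  "P_poly m a = (1 / 4^m) *
     (\<Sum>k\<le>m. real ((2*m-2*k) choose (m-k)) * real ((m+k) choose m) * (2*(a+1))^k)"
proof -
  let ?g = "\<lambda>k. 2^k * real ((2*m-2*k) choose (m-k)) * real ((m+k) choose m)"
  have coef: "of_rat (d_coef l m) = (1/4^m) * (\<Sum>k\<le>m. ?g k * real (k choose l))" for l
  proof -
    have "of_rat (d_coef l m) = (1/4^m) * (\<Sum>k=l..m. ?g k * real (k choose l))"
      unfolding d_coef_def by (simp add: of_rat_sum of_rat_mult of_rat_divide of_rat_power power_mult)
    also have "(\<Sum>k=l..m. ?g k * real (k choose l)) = (\<Sum>k\<le>m. ?g k * real (k choose l))"
      by (rule sum.mono_neutral_left) auto
    finally show ?thesis .
  qed
  have binom: "(\<Sum>l\<le>m. real (k choose l) * a^l) = (a+1)^k" if "k \<le> m" for k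
  proof -
    have "(\<Sum>l\<le>m. real (k choose l) * a^l) = (\<Sum>l\<le>k. real (k choose l) * a^l)"
      using that by (intro sum.mono_neutral_right) auto
    also have "\<dots> = (a+1)^k" by (simp add: binomial_ring)
    finally show ?thesis .
  qed
  have "P_poly m a = (1/4^m) * (\<Sum>l\<le>m. \<Sum>k\<le>m. ?g k * (real (k choose l) * a^l))"
    unfolding P_poly_def atLeast0AtMost coef
    by (simp add: sum_distrib_left sum_distrib_right mult.assoc)
  also have "\<dots> = (1/4^m) * (\<Sum>k\<le>m. ?g k * (\<Sum>l\<le>m. real (k choose l) * a^l))"
    by (subst sum.swap) (simp add: sum_distrib_left)
  also have "\<dots> = (1/4^m) * (\<Sum>k\<le>m. ?g k * (a+1)^k)"
    using binom by simp
  also have "\<dots> = (1 / 4^m) *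
     (\<Sum>k\<le>m. real ((2*m-2*k) choose (m-k)) * real ((m+k) choose m) * (2*(a+1))^k)"
    by (simp only: power_mult_distrib mult_ac)
  finally show ?thesis .
qed

section \<open>Odd powers of \<open>x\<close> in terms of \<open>x - 1/x\<close>\<close>

text \<open>\<open>sym_poly m t\<close> and \<open>antisym_poly m t\<close> are the even polynomials with
  \<open>x^(2m+1) + x^-(2m+1) = (x + 1/x) sym_poly m (x - 1/x)\<close> and
  \<open>x^(2m+2) - x^-(2m+2) = (x + 1/x)(x - 1/x) antisym_poly m (x - 1/x)\<close>.\<close>

definition sym_poly :: "nat \<Rightarrow> real \<Rightarrow> real" where
  "sym_poly m t = (\<Sum>k\<le>m. real ((m+k) choose (2*k)) * t^(2*k))"

definition antisym_poly :: "nat \<Rightarrow> real \<Rightarrow> real" where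
  "antisym_poly m t = (\<Sum>k\<le>m. real ((m+k+1) choose (2*k+1)) * t^(2*k))"

lemma sym_poly_Suc: "sym_poly (Suc m) t = sym_poly m t + t^2 * antisym_poly m t"
proof -
  have pascal: "(m+k+2) choose (2*k+2) = ((m+k+1) choose (2*k+2)) + ((m+k+1) choose (2*k+1))"
    for k by (simp add: numeral_2_eq_2)
  have shift: "sym_poly m t = 1 + (\<Sum>k\<le>m. real ((m+k+1) choose (2*k+2)) * t^(2*k+2))"
  proof -
    have "sym_poly m t = (\<Sum>k\<le>Suc m. real ((m+k) choose (2*k)) * t^(2*k))"
      unfolding sym_poly_def by (subst sum.atMost_Suc) (simp del: binomial_Suc_Suc add: binomial_eq_0)
    then show ?thesis
      by (subst (asm) sum.atMost_Suc_shift) (simp del: binomial_Suc_Suc add: algebra_simps)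
  qed
  have "sym_poly (Suc m) t = 1 + (\<Sum>k\<le>m. real ((m+k+2) choose (2*k+2)) * t^(2*k+2))"
    unfolding sym_poly_def
    by (subst sum.atMost_Suc_shift) (simp del: binomial_Suc_Suc add: algebra_simps)
  also have "\<dots> = 1 + (\<Sum>k\<le>m. real ((m+k+1) choose (2*k+2)) * t^(2*k+2))
                   + (\<Sum>k\<le>m. real ((m+k+1) choose (2*k+1)) * t^(2*k+2))"
    unfolding pascal by (simp del: binomial_Suc_Suc add: sum.distrib algebra_simps)
  also have "(\<Sum>k\<le>m. real ((m+k+1) choose (2*k+1)) * t^(2*k+2)) = t^2 * antisym_poly m t"
    unfolding antisym_poly_def
    by (simp del: binomial_Suc_Suc add: sum_distrib_left power_add algebra_simps power2_eq_square)
  finally show ?thesis unfolding shift by simp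
qed

lemma antisym_poly_Suc: "antisym_poly (Suc m) t = antisym_poly m t + sym_poly (Suc m) t"
proof -
  have "antisym_poly (Suc m) t
     = (\<Sum>k\<le>Suc m. real ((m+k+1) choose (Suc (2*k))) * t^(2*k))
       + (\<Sum>k\<le>Suc m. real ((m+k+1) choose (2*k)) * t^(2*k))"
  proof -
    have "antisym_poly (Suc m) t = (\<Sum>k\<le>Suc m. real (Suc (m+k+1) choose Suc (2*k)) * t^(2*k))"
      unfolding antisym_poly_def by (simp del: binomial_Suc_Suc)
    then show ?thesis
      by (simp only: binomial_Suc_Suc of_nat_add distrib_right sum.distrib add.commute)
  qed
  also have "(\<Sum>k\<le>Suc m. real ((m+k+1) choose (Suc (2*k))) * t^(2*k)) = antisym_poly m t"
    unfolding antisym_poly_def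
    by (subst sum.atMost_Suc) (simp del: binomial_Suc_Suc add: binomial_eq_0 algebra_simps)
  also have "(\<Sum>k\<le>Suc m. real ((m+k+1) choose (2*k)) * t^(2*k)) = sym_poly (Suc m) t"
    unfolding sym_poly_def by (simp del: binomial_Suc_Suc add: algebra_simps)
  finally show ?thesis .
qed

text \<open>Both identities are proved simultaneously by induction on \<open>m\<close>; only the
  first one is used later.\<close>

lemma power_reciprocal_identities:
  fixes x :: real
  assumes x: "x \<noteq> 0"
  shows "x^(2*m+1) + (1/x)^(2*m+1) = (x + 1/x) * sym_poly m (x - 1/x)
       \<and> x^(2*m+2) - (1/x)^(2*m+2) = (x + 1/x) * (x - 1/x) * antisym_poly m (x - 1/x)"
proof (induction m)
  case 0
  then show ?case using x by (simp add: sym_poly_def antisym_poly_def field_simps power2_eq_square)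
next
  case (Suc m)
  let ?t = "x - 1/x" and ?s = "x + 1/x"
  define u where "u = x^(2*m+1)"
  define v where "v = (1/x)^(2*m+1)"
  have pow: "x^(2*Suc m+1) = u * x^2" "(1/x)^(2*Suc m+1) = v * (1/x)^2"
     "x^(2*m+2) = u * x" "(1/x)^(2*m+2) = v * (1/x)"
     "x^(2*Suc m+2) = u * x^3" "(1/x)^(2*Suc m+2) = v * (1/x)^3"
    by (simp_all add: u_def v_def power_add power_Suc algebra_simps numeral_eq_Suc)
  have IH1: "u + v = ?s * sym_poly m ?t"
    using conjunct1[OF Suc.IH] unfolding u_def v_def .
  have IH2: "u * x - v * (1/x) = ?s * ?t * antisym_poly m ?t"
    using conjunct2[OF Suc.IH] unfolding pow(3,4) .
  have odd_step: "u * x^2 + v * (1/x)^2 = (u + v) + ?t * (u * x - v * (1/x))"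
    using x by (simp add: algebra_simps power2_eq_square)
  have odd: "u * x^2 + v * (1/x)^2 = ?s * sym_poly (Suc m) ?t"
    unfolding odd_step sym_poly_Suc IH1 IH2 using x by (simp add: field_simps power2_eq_square)
  have even_step: "u * x^3 - v * (1/x)^3 = (u * x - v * (1/x)) + ?t * (u * x^2 + v * (1/x)^2)"
    using x by (simp add: field_simps power3_eq_cube power2_eq_square)
  have even: "u * x^3 - v * (1/x)^3 = ?s * ?t * antisym_poly (Suc m) ?t"
    unfolding even_step odd IH2 antisym_poly_Suc distrib_left[of "?s * ?t"] by (simp only: mult_ac)
  show ?case using odd even unfolding pow by simp
qed

section \<open>Wallis-type integrals\<close>

definition wallis :: "nat \<Rightarrow> nat \<Rightarrow> real" where
  "wallis p q = integral {0..pi/2} (\<lambda>\<theta>. sin \<theta> ^ p * cos \<theta> ^ q)"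

lemma wallis_has_integral:
  "((\<lambda>\<theta>. sin \<theta> ^ p * cos \<theta> ^ q) has_integral wallis p q) {0..pi/2}"
  unfolding wallis_def
  by (intro integrable_integral integrable_continuous_interval continuous_intros)

text \<open>\<open>sin^2 + cos^2 = 1\<close> gives the first relation.\<close>

lemma wallis_pythagoras: "wallis p (q+2) + wallis (p+2) q = wallis p q"
proof -
  have factor: "s ^ p * c ^ (q+2) + s ^ (p+2) * c ^ q = s ^ p * c ^ q * (s\<^sup>2 + c\<^sup>2)"
    for s c :: real
    by (simp add: power_add algebra_simps power2_eq_square)
  have sum_eq: "(\<lambda>\<theta>. sin \<theta> ^ p * cos \<theta> ^ (q+2) + sin \<theta> ^ (p+2) * cos \<theta> ^ q)
              = (\<lambda>\<theta>::real. sin \<theta> ^ p * cos \<theta> ^ q)"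
    unfolding factor by simp
  have "((\<lambda>\<theta>. sin \<theta> ^ p * cos \<theta> ^ (q+2) + sin \<theta> ^ (p+2) * cos \<theta> ^ q)
          has_integral wallis p (q+2) + wallis (p+2) q) {0..pi/2}"
    by (intro has_integral_add wallis_has_integral)
  then show ?thesis unfolding sum_eq using wallis_has_integral by (rule has_integral_unique)
qed

text \<open>Integrating the derivative of \<open>sin^(p+1) cos^(q+1)\<close>, which vanishes at both
  ends of \<open>[0,pi/2]\<close>, gives the second relation.\<close>

lemma wallis_by_parts: "real (p+1) * wallis p (q+2) = real (q+1) * wallis (p+2) q"
proof -
  let ?\<phi> = "\<lambda>\<theta>::real. sin \<theta> ^ (p+1) * cos \<theta> ^ (q+1)"
  let ?d = "\<lambda>\<theta>::real. real (p+1) * (sin \<theta> ^ p * cos \<theta> ^ (q+2))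
                     - real (q+1) * (sin \<theta> ^ (p+2) * cos \<theta> ^ q)"
  have "(?d has_integral ?\<phi> (pi/2) - ?\<phi> 0) {0..pi/2}"
  proof (rule fundamental_theorem_of_calculus)
    fix x :: real
    show "(?\<phi> has_vector_derivative ?d x) (at x within {0..pi/2})"
      unfolding has_real_derivative_iff_has_vector_derivative[symmetric]
      by (rule derivative_eq_intros refl)+ (simp add: power_add)
  qed simp
  then have "(?d has_integral 0) {0..pi/2}" by simp
  moreover have "(?d has_integral real (p+1) * wallis p (q+2) - real (q+1) * wallis (p+2) q) {0..pi/2}"
    by (intro has_integral_diff has_integral_mult_right wallis_has_integral)
  ultimately have "0 = real (p+1) * wallis p (q+2) - real (q+1) * wallis (p+2) q"
    by (rule has_integral_unique)
  then show ?thesis by simp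
qed

lemma wallis_step_sin: "real (p+q+2) * wallis (p+2) q = real (p+1) * wallis p q"
proof -
  have "wallis p (q+2) = wallis p q - wallis (p+2) q"
    using wallis_pythagoras[of p q] by simp
  then have "real (p+1) * (wallis p q - wallis (p+2) q) = real (q+1) * wallis (p+2) q"
    using wallis_by_parts[of p q] by simp
  then show ?thesis by (simp add: algebra_simps)
qed

lemma wallis_step_cos: "real (p+q+2) * wallis p (q+2) = real (q+1) * wallis p q"
proof -
  have "wallis (p+2) q = wallis p q - wallis p (q+2)"
    using wallis_pythagoras[of p q] by simp
  then have "real (p+1) * wallis p (q+2) = real (q+1) * (wallis p q - wallis p (q+2))"
    using wallis_by_parts[of p q] by simp
  then show ?thesis by (simp add: algebra_simps)
qed

definition wallis_even :: "nat \<Rightarrow> nat \<Rightarrow> real" where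
  "wallis_even k l = pi/2 * fact (2*k) * fact (2*l) / (4^(k+l) * fact k * fact l * fact (k+l))"

lemma wallis_even_Suc_left:
  "wallis_even (Suc k) l = real (2*k+1) / real (2*k+2*l+2) * wallis_even k l"
proof -
  have a: "fact (2*Suc k) = (real (2*k+2) * real (2*k+1)) * (fact (2*k)::real)"
    by (simp add: fact_Suc numeral_2_eq_2 algebra_simps)
  have b: "fact (Suc k + l) = real (k+l+1) * (fact (k+l)::real)"
    by (simp add: fact_Suc algebra_simps)
  have c: "fact (Suc k) = real (k+1) * (fact k::real)" by (simp add: fact_Suc)
  have d: "(4::real)^(Suc k + l) = 4 * 4^(k+l)" by simp
  show ?thesis unfolding wallis_even_def a b c d
    by (simp add: divide_simps del: of_nat_add of_nat_Suc) (simp add: algebra_simps)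
qed

lemma wallis_even_Suc_right:
  "wallis_even 0 (Suc l) = real (2*l+1) / real (2*l+2) * wallis_even 0 l"
proof -
  have a: "fact (2*Suc l) = (real (2*l+2) * real (2*l+1)) * (fact (2*l)::real)"
    by (simp add: fact_Suc numeral_2_eq_2 algebra_simps)
  have c: "fact (Suc l) = real (l+1) * (fact l::real)" by (simp add: fact_Suc)
  have d: "(4::real)^(0 + Suc l) = 4 * 4^(0+l)" by simp
  show ?thesis unfolding wallis_even_def a c d
    by (simp add: divide_simps del: of_nat_add of_nat_Suc) (simp add: algebra_simps)
qed

lemma wallis_even_exponents_cos: "wallis 0 (2*l) = wallis_even 0 l"
proof (induction l)
  case 0
  show ?case by (simp add: wallis_def wallis_even_def)
next
  case (Suc l)
  have "real (2*l+2) * wallis 0 (2*l+2) = real (2*l+1) * wallis 0 (2*l)"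
    using wallis_step_cos[of 0 "2*l"] by simp
  then have "wallis 0 (2*Suc l) = real (2*l+1) / real (2*l+2) * wallis 0 (2*l)"
    by (simp add: divide_simps mult.commute del: of_nat_add of_nat_Suc)
  then show ?case using Suc.IH wallis_even_Suc_right by simp
qed

lemma wallis_even_exponents: "wallis (2*k) (2*l) = wallis_even k l"
proof (induction k)
  case 0
  show ?case using wallis_even_exponents_cos by simp
next
  case (Suc k)
  have "real (2*k+2*l+2) * wallis (2*k+2) (2*l) = real (2*k+1) * wallis (2*k) (2*l)"
    using wallis_step_sin[of "2*k" "2*l"] by (simp add: add.assoc)
  then have "wallis (2*Suc k) (2*l) = real (2*k+1) / real (2*k+2*l+2) * wallis (2*k) (2*l)"
    by (simp add: divide_simps mult.commute del: of_nat_add of_nat_Suc)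
  then show ?case using Suc.IH wallis_even_Suc_left by simp
qed

section \<open>The integrand and its symmetry under \<open>x \<mapsto> 1/x\<close>\<close>

definition quartic_integrand :: "real \<Rightarrow> nat \<Rightarrow> real \<Rightarrow> real" where
  "quartic_integrand a m x = 1 / (x ^ 4 + 2 * a * x ^ 2 + 1) ^ (m + 1)"

text \<open>For \<open>a > -1\<close> the quartic has no real zero, by completing the square when \<open>a < 0\<close>.\<close>

lemma quartic_pos:
  fixes a x :: real
  assumes "a > -1"
  shows "x ^ 4 + 2 * a * x ^ 2 + 1 > 0"
proof (cases "a \<ge> 0")
  case True
  have "x ^ 4 = (x^2)^2" by (simp flip: power_mult)
  then show ?thesis using True by (smt (verit) zero_le_power2 mult_nonneg_nonneg)
next
  case False
  have "x ^ 4 + 2 * a * x ^ 2 + 1 = (x^2 + a)^2 + (1 - a^2)"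
    by (simp add: algebra_simps power2_eq_square power4_eq_xxxx)
  moreover have "a^2 < 1" using False assms by (simp add: abs_square_less_1)
  ultimately show ?thesis by (smt (verit) zero_le_power2)
qed

lemma quartic_integrand_continuous:
  assumes "a > -1"
  shows "continuous_on S (quartic_integrand a m)"
  unfolding quartic_integrand_def using quartic_pos[OF assms]
  by (intro continuous_intros) (auto simp: less_imp_neq[symmetric])

lemma quartic_integrand_nonneg:
  assumes "a > -1"
  shows "quartic_integrand a m x \<ge> 0"
  unfolding quartic_integrand_def using quartic_pos[OF assms, of x] by simp

text \<open>The key algebraic identity: since \<open>x^4 + 2ax^2 + 1 = x^2 (t^2 + c)\<close> with
  \<open>t = x - 1/x\<close>, the symmetrised integrand \<open>f(x) + f(1/x)/x^2\<close> is \<open>dt/dx\<close> times a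
  rational function of \<open>t\<close>.\<close>

lemma quartic_integrand_inversion:
  fixes x a :: real
  assumes x: "x > 0" and a: "a > -1"
  defines "c \<equiv> 2 * (a + 1)" and "t \<equiv> x - 1/x"
  shows "quartic_integrand a m x + quartic_integrand a m (1/x) / x^2
       = (1 + 1/x^2) * sym_poly m t / (t^2 + c)^(m+1)"
proof -
  define D where "D = (t^2 + c)^(m+1)"
  have "t^2 + c > 0" unfolding c_def using a by (smt (verit) zero_le_power2)
  then have "D \<noteq> 0" unfolding D_def by simp
  have scale: "(y^2 * (t^2 + c))^(m+1) = y^(2*m+2) * D" for y :: real
  proof -
    have "(y^2)^(m+1) = y^(2*m+2)" by (metis power_mult mult_2 add_mult_distrib2 mult_1_right)
    then show ?thesis unfolding D_def power_mult_distrib by simp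
  qed
  have q1: "x ^ 4 + 2 * a * x ^ 2 + 1 = x^2 * (t^2 + c)"
    using x unfolding t_def c_def by (simp add: field_simps power2_eq_square power4_eq_xxxx)
  have q2: "(1/x) ^ 4 + 2 * a * (1/x) ^ 2 + 1 = (1/x)^2 * (t^2 + c)"
    using x unfolding t_def c_def by (simp add: field_simps power2_eq_square power4_eq_xxxx)
  have "quartic_integrand a m x + quartic_integrand a m (1/x) / x^2
      = ((1/x)^(2*m+2) + x^(2*m)) / D"
    unfolding quartic_integrand_def q1 q2 scale
    using x \<open>D \<noteq> 0\<close> by (simp add: power_one_over field_simps power2_eq_square)
  also have "(1/x)^(2*m+2) + x^(2*m) = (1/x) * (x^(2*m+1) + (1/x)^(2*m+1))"
    using x by (simp add: field_simps)
  also have "\<dots> = (1 + 1/x^2) * sym_poly m t"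
  proof -
    have "x^(2*m+1) + (1/x)^(2*m+1) = (x + 1/x) * sym_poly m t"
      using conjunct1[OF power_reciprocal_identities[of x m]] x unfolding t_def by simp
    then show ?thesis using x by (simp add: field_simps power2_eq_square)
  qed
  finally show ?thesis unfolding D_def .
qed

text \<open>The inversion principle: for \<open>f \<ge> 0\<close> continuous on \<open>[0,oo)\<close>, a primitive \<open>G\<close> of
  \<open>f(x) + f(1/x)/x^2\<close> on \<open>(0,oo)\<close> computes the whole integral, because
  \<open>int_0^x f - int_0^(1/x) f - G(x)\<close> is constant and \<open>int_0^(1/x) f \<rightarrow> 0\<close>.\<close>

lemma has_integral_by_inversion:
  fixes f G :: "real \<Rightarrow> real"
  assumes cont: "continuous_on {0..} f"
    and nonneg: "\<And>x. x \<ge> 0 \<Longrightarrow> f x \<ge> 0"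
    and deriv: "\<And>x. x > 0 \<Longrightarrow> (G has_real_derivative f x + f (1/x) / x^2) (at x)"
    and lim: "(G \<longlongrightarrow> L) at_top"
  shows "(f has_integral L - G 1) {0..}"
proof -
  define F where "F y = integral {0..y} f" for y
  have cont_Icc: "continuous_on {0..y} f" for y
    using cont by (rule continuous_on_subset) auto
  have F_deriv: "(F has_real_derivative f x) (at x)" if x: "x > 0" for x
  proof -
    have "(F has_real_derivative f x) (at x within {0..x+1})"
      unfolding F_def[abs_def] using x by (intro integral_has_real_derivative cont_Icc) auto
    then show ?thesis using at_within_Icc_at[of 0 x "x+1"] x by simp
  qed
  have F_at_0: "(F \<longlongrightarrow> 0) (at_right 0)"
  proof -
    have "continuous_on {0..1} F"
      unfolding F_def[abs_def] by (intro indefinite_integral_continuous_1 integrable_continuous_interval cont_Icc)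
    from continuous_on_Icc_at_rightD[OF this] show ?thesis by (simp add: F_def)
  qed
  have zero_deriv: "((\<lambda>x. F x - F (1/x) - G x) has_real_derivative 0) (at x)" if x: "x > 0" for x
  proof -
    have "((\<lambda>x. 1/x) has_real_derivative -(1/x^2)) (at x)"
      using x by (auto intro!: derivative_eq_intros simp: power2_eq_square)
    from DERIV_chain2[OF F_deriv this] x
    have "((\<lambda>x. F (1/x)) has_real_derivative f (1/x) * (-(1/x^2))) (at x)" by simp
    from DERIV_diff[OF DERIV_diff[OF F_deriv[OF x] this] deriv[OF x]] show ?thesis by simp
  qed
  obtain C where "\<forall>x\<in>{0<..}. F x - F (1/x) - G x = C"
    using has_field_derivative_zero_constant[of "{0<..}" "\<lambda>x. F x - F (1/x) - G x"]
    by (auto intro: has_field_derivative_at_within zero_deriv)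
  then have C: "F x - F (1/x) - G x = C" if "x > 0" for x
    using that by simp
  have F_eq: "F x = F (1/x) + G x - G 1" if "x > 0" for x
    using C[OF that] C[of 1] by simp
  have "\<forall>\<^sub>F x in at_top. F x = F (1/x) + G x - G 1"
    using eventually_gt_at_top[of 0] by eventually_elim (rule F_eq)
  moreover have "((\<lambda>x. F (1/x) + G x - G 1) \<longlongrightarrow> 0 + L - G 1) at_top"
    using filterlim_compose[OF F_at_0 filterlim_inverse_at_right_top] lim
    by (intro tendsto_intros) (simp_all add: inverse_eq_divide)
  ultimately have "(F \<longlongrightarrow> L - G 1) at_top"
    using tendsto_cong by fastforce
  then have lim_F: "((\<lambda>y. integral {0..y} f) \<longlongrightarrow> L - G 1) at_top"
    by (simp only: F_def[abs_def])
  show ?thesis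
    by (rule has_integral_to_inf[OF integrable_continuous_interval[OF cont_Icc] lim_F nonneg])
qed

section \<open>The substitution \<open>t = sqrt c tan \<theta>\<close>\<close>

text \<open>Under \<open>t = sqrt c tan \<theta>\<close> the form \<open>sym_poly m t dt / (t^2 + c)^(m+1)\<close> becomes
  \<open>trig_poly m c \<theta> d\<theta> / (c^m sqrt c)\<close>.\<close>

definition trig_poly :: "nat \<Rightarrow> real \<Rightarrow> real \<Rightarrow> real" where
  "trig_poly m c \<theta> = (\<Sum>k\<le>m. real ((m+k) choose (2*k)) * (c * (sin \<theta>)^2)^k * ((cos \<theta>)^2)^(m-k))"

lemma trig_poly_continuous: "continuous_on S (trig_poly m c)"
  unfolding trig_poly_def by (intro continuous_intros)

lemma trig_poly_arctan:
  assumes c: "c > 0"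
  shows "trig_poly m c (arctan (t / sqrt c)) = sym_poly m t * (c / (t^2 + c))^m"
proof -
  let ?\<tau> = "t / sqrt c"
  have pos: "t^2 + c > 0" using c by (smt (verit) zero_le_power2)
  have tau2: "1 + ?\<tau>^2 = (t^2 + c) / c" using c by (simp add: power_divide field_simps)
  have "0 < 1 + ?\<tau>^2" by (smt (verit) zero_le_power2)
  then have sin2: "(sin (arctan ?\<tau>))^2 = t^2 / (t^2 + c)"
        and cos2: "(cos (arctan ?\<tau>))^2 = c / (t^2 + c)"
    unfolding sin_arctan cos_arctan power_divide real_sqrt_pow2[OF less_imp_le] tau2
    using c pos by (simp_all add: field_simps power_divide)
  have "(c * (t^2 / (t^2 + c)))^k * (c / (t^2 + c))^(m-k) = t^(2*k) * (c / (t^2 + c))^m"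
    if "k \<le> m" for k
  proof -
    have "c * (t^2 / (t^2 + c)) = t^2 * (c / (t^2 + c))" by simp
    then have "(c * (t^2 / (t^2 + c)))^k = t^(2*k) * (c / (t^2 + c))^k"
      by (simp only: power_mult_distrib power_mult)
    then show ?thesis using that by (simp flip: power_add)
  qed
  then show ?thesis
    unfolding trig_poly_def sym_poly_def sin2 cos2 sum_distrib_right
    by (intro sum.cong refl) (simp add: mult.assoc)
qed

text \<open>A primitive of \<open>trig_poly m c\<close> on \<open>[-pi/2, pi/2]\<close>, the range of \<open>arctan\<close>.\<close>

definition trig_area :: "nat \<Rightarrow> real \<Rightarrow> real \<Rightarrow> real" where
  "trig_area m c \<theta> = integral {-(pi/2)..\<theta>} (trig_poly m c)"

lemma trig_area_deriv:
  assumes "-(pi/2) < \<theta>" "\<theta> < pi/2"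
  shows "(trig_area m c has_real_derivative trig_poly m c \<theta>) (at \<theta>)"
proof -
  have "(trig_area m c has_real_derivative trig_poly m c \<theta>) (at \<theta> within {-(pi/2)..pi/2})"
    unfolding trig_area_def using assms by (intro integral_has_real_derivative trig_poly_continuous) auto
  then show ?thesis using at_within_Icc_at[OF assms] by simp
qed

lemma trig_area_continuous: "continuous_on {-(pi/2)..pi/2} (trig_area m c)"
  unfolding trig_area_def
  by (intro indefinite_integral_continuous_1 integrable_continuous_interval trig_poly_continuous)

definition tan_primitive :: "nat \<Rightarrow> real \<Rightarrow> real \<Rightarrow> real" where
  "tan_primitive m c t = (trig_area m c (arctan (t / sqrt c)) - trig_area m c 0) / (c^m * sqrt c)"

lemma tan_primitive_deriv:
  assumes c: "c > 0"
  shows "(tan_primitive m c has_real_derivative sym_poly m t / (t^2 + c)^(m+1)) (at t)"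
proof -
  let ?\<tau> = "t / sqrt c"
  have pos: "t^2 + c > 0" using c by (smt (verit) zero_le_power2)
  have "((\<lambda>t. t / sqrt c) has_real_derivative 1 / sqrt c) (at t)"
    by (rule DERIV_cdivide[OF DERIV_ident])
  from DERIV_chain2[OF DERIV_arctan this]
  have inner: "((\<lambda>t. arctan (t / sqrt c)) has_real_derivative inverse (1 + ?\<tau>^2) * (1 / sqrt c)) (at t)" .
  have outer: "(trig_area m c has_real_derivative trig_poly m c (arctan ?\<tau>)) (at (arctan ?\<tau>))"
    using arctan_bounded[of ?\<tau>] by (intro trig_area_deriv) auto
  have "((\<lambda>t. trig_area m c (arctan (t / sqrt c))) has_real_derivative
          sym_poly m t * (c / (t^2 + c))^m * (inverse (1 + ?\<tau>^2) * (1 / sqrt c))) (at t)"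
    using DERIV_chain2[OF outer inner] unfolding trig_poly_arctan[OF c] .
  from DERIV_cdivide[where c = "c^m * sqrt c", OF DERIV_diff[OF this DERIV_const]]
  have "(tan_primitive m c has_real_derivative
          sym_poly m t * (c / (t^2 + c))^m * (inverse (1 + ?\<tau>^2) * (1 / sqrt c)) / (c^m * sqrt c)) (at t)"
    unfolding tan_primitive_def[abs_def] by simp
  moreover have "inverse (1 + ?\<tau>^2) = c / (t^2 + c)"
    using c pos by (simp add: power_divide field_simps)
  moreover have "sym_poly m t * (c / (t^2 + c))^m * (c / (t^2 + c) * (1 / sqrt c)) / (c^m * sqrt c)
      = sym_poly m t * (c / (t^2 + c))^(m+1) / (c^m * (sqrt c * sqrt c))"
    by (simp add: ac_simps)
  moreover have "\<dots> = sym_poly m t / (t^2 + c)^(m+1)"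
    using c by (simp add: power_divide)
  ultimately show ?thesis by simp
qed

lemma tan_primitive_limit:
  assumes c: "c > 0"
  shows "(tan_primitive m c \<longlongrightarrow> integral {0..pi/2} (trig_poly m c) / (c^m * sqrt c)) at_top"
proof -
  have "filterlim (\<lambda>t. (1 / sqrt c) * t) at_top at_top"
    using c by (intro filterlim_tendsto_pos_mult_at_top[OF tendsto_const] filterlim_ident) simp
  then have "filterlim (\<lambda>t. t / sqrt c) at_top at_top" by simp
  from filterlim_compose[OF tendsto_arctan_at_top this]
  have "((\<lambda>t. arctan (t / sqrt c)) \<longlongrightarrow> pi/2) at_top" .
  then have "((\<lambda>t. trig_area m c (arctan (t / sqrt c))) \<longlongrightarrow> trig_area m c (pi/2)) at_top"
    using arctan_bounded by (intro continuous_on_tendsto_compose[OF trig_area_continuous])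
                            (auto intro: always_eventually less_imp_le)
  then have "(tan_primitive m c \<longlongrightarrow> (trig_area m c (pi/2) - trig_area m c 0) / (c^m * sqrt c)) at_top"
    unfolding tan_primitive_def[abs_def] using c by (intro tendsto_intros) auto
  moreover have "trig_area m c (pi/2) - trig_area m c 0 = integral {0..pi/2} (trig_poly m c)"
    using Henstock_Kurzweil_Integration.integral_combine[of "-(pi/2)" 0 "pi/2" "trig_poly m c"]
    unfolding trig_area_def by (simp add: integrable_continuous_interval trig_poly_continuous)
  ultimately show ?thesis by simp
qed

lemma quartic_integral_as_trig_integral:
  assumes a: "a > -1"
  defines "c \<equiv> 2 * (a + 1)"
  shows "(quartic_integrand a m has_integral
            integral {0..pi/2} (trig_poly m c) / (c^m * sqrt c)) {0..}"
proof -
  have c: "c > 0" unfolding c_def using a by simp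
  have "(quartic_integrand a m has_integral
           integral {0..pi/2} (trig_poly m c) / (c^m * sqrt c) - tan_primitive m c (1 - 1/1)) {0..}"
  proof (rule has_integral_by_inversion[where G = "\<lambda>x. tan_primitive m c (x - 1/x)"])
    show "continuous_on {0..} (quartic_integrand a m)"
      using a by (rule quartic_integrand_continuous)
    show "quartic_integrand a m x \<ge> 0" for x
      using a by (rule quartic_integrand_nonneg)
    show "((\<lambda>x. tan_primitive m c (x - 1/x)) has_real_derivative
            quartic_integrand a m x + quartic_integrand a m (1/x) / x^2) (at x)" if x: "x > 0" for x
    proof -
      have "((\<lambda>x. x - 1/x) has_real_derivative 1 + 1/x^2) (at x)"
        using x by (auto intro!: derivative_eq_intros simp: power2_eq_square field_simps)
      from DERIV_chain2[OF tan_primitive_deriv[OF c] this] show ?thesis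
        unfolding quartic_integrand_inversion[OF x a] c_def by (simp add: mult.commute)
    qed
    have "((\<lambda>x::real. - inverse x) \<longlongrightarrow> 0) at_top"
      using tendsto_minus[OF tendsto_inverse_0_at_top[OF filterlim_ident]] by simp
    from filterlim_tendsto_add_at_top[OF this filterlim_ident]
    have "filterlim (\<lambda>x::real. x - 1/x) at_top at_top" by (simp add: inverse_eq_divide)
    from filterlim_compose[OF tan_primitive_limit[OF c] this]
    show "((\<lambda>x. tan_primitive m c (x - 1/x)) \<longlongrightarrow>
            integral {0..pi/2} (trig_poly m c) / (c^m * sqrt c)) at_top" .
  qed
  then show ?thesis by (simp add: tan_primitive_def)
qed

section \<open>Evaluation of the trigonometric integral\<close>

lemma trig_poly_integral:
  "(trig_poly m c has_integral (\<Sum>k\<le>m. real ((m+k) choose (2*k)) * c^k * wallis_even k (m-k)))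
     {0..pi/2}"
proof -
  have "trig_poly m c = (\<lambda>\<theta>. \<Sum>k\<le>m. real ((m+k) choose (2*k)) * c^k
                                       * (sin \<theta> ^ (2*k) * cos \<theta> ^ (2*(m-k))))"
    unfolding trig_poly_def by (intro ext sum.cong refl) (simp only: power_mult_distrib power_mult mult.assoc)
  moreover have "((\<lambda>\<theta>. \<Sum>k\<le>m. real ((m+k) choose (2*k)) * c^k * (sin \<theta> ^ (2*k) * cos \<theta> ^ (2*(m-k))))
      has_integral (\<Sum>k\<le>m. real ((m+k) choose (2*k)) * c^k * wallis_even k (m-k))) {0..pi/2}"
    unfolding wallis_even_exponents[symmetric]
    by (intro has_integral_sum finite_atMost has_integral_mult_right wallis_has_integral)
  ultimately show ?thesis by simp
qed

lemma binomial_wallis_product: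
  assumes k: "k \<le> m"
  shows "real ((m+k) choose (2*k)) * wallis_even k (m-k)
       = pi/2 / 4^m * real ((2*m-2*k) choose (m-k)) * real ((m+k) choose m)"
proof -
  have b1: "real ((m+k) choose (2*k)) = fact (m+k) / (fact (2*k) * fact (m-k))"
    using k by (subst binomial_fact) (auto simp: numeral_2_eq_2)
  have b2: "real ((2*m-2*k) choose (m-k)) = fact (2*m-2*k) / (fact (m-k) * fact (m-k))"
    using k by (subst binomial_fact) (auto simp: numeral_2_eq_2)
  have b3: "real ((m+k) choose m) = fact (m+k) / (fact m * fact k)"
    by (subst binomial_fact) auto
  have w: "wallis_even k (m-k) = pi/2 * fact (2*k) * fact (2*m-2*k) / (4^m * fact k * fact (m-k) * fact m)"
    unfolding wallis_even_def using k by (simp add: right_diff_distrib')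
  have regroup: "A / (B * D) * (p * B * E / (Q * K * D * M)) = p / Q * (E / (D * D)) * (A / (M * K))"
    if "B \<noteq> 0" "D \<noteq> 0" "Q \<noteq> 0" "K \<noteq> 0" "M \<noteq> 0" for A B D E K M p Q :: real
    using that by (simp add: field_simps)
  show ?thesis unfolding b1 b2 b3 w by (rule regroup) simp_all
qed

lemma trig_integral_value:
  assumes a: "a > -1"
  defines "c \<equiv> 2 * (a + 1)"
  shows "integral {0..pi/2} (trig_poly m c) / (c^m * sqrt c)
       = (pi / 2) * P_poly m a / (2 * (a + 1)) powr (real m + 1 / 2)"
proof -
  have c: "c > 0" unfolding c_def using a by simp
  have "integral {0..pi/2} (trig_poly m c)
      = (\<Sum>k\<le>m. real ((m+k) choose (2*k)) * c^k * wallis_even k (m-k))"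
    using trig_poly_integral by (rule integral_unique)
  also have "\<dots> = (\<Sum>k\<le>m. pi/2 / 4^m * real ((2*m-2*k) choose (m-k)) * real ((m+k) choose m) * c^k)"
  proof (rule sum.cong[OF refl])
    fix k assume "k \<in> {..m}"
    then have "c^k * (real ((m+k) choose (2*k)) * wallis_even k (m-k))
             = c^k * (pi/2 / 4^m * real ((2*m-2*k) choose (m-k)) * real ((m+k) choose m))"
      by (simp add: binomial_wallis_product)
    then show "real ((m+k) choose (2*k)) * c^k * wallis_even k (m-k)
             = pi/2 / 4^m * real ((2*m-2*k) choose (m-k)) * real ((m+k) choose m) * c^k"
      by (simp only: mult_ac)
  qed
  also have "\<dots> = pi/2 * P_poly m a"
    unfolding P_poly_shifted c_def by (simp add: sum_distrib_left mult_ac)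
  finally have integral_eq: "integral {0..pi/2} (trig_poly m c) = pi/2 * P_poly m a" .
  have "c powr (real m + 1/2) = c^m * sqrt c"
    using c by (simp add: powr_add powr_realpow powr_half_sqrt)
  then show ?thesis unfolding integral_eq c_def[symmetric] by simp
qed

theorem mainTheorem1:
  fixes m :: nat and a :: real
  assumes "a > -1"
  shows "((\<lambda>x::real. 1 / (x ^ 4 + 2 * a * x ^ 2 + 1) ^ (m + 1)) has_integral
            (pi / 2) * P_poly m a / (2 * (a + 1)) powr (real m + 1 / 2)) {0..}
         \<and> (\<forall>l \<le> m. d_coef l m > 0)
         \<and> (m \<ge> 1 \<longrightarrow> (\<forall>l \<le> m. 2 ^ (2 * m - 1) * d_coef l m \<in> \<int>))"
proof -
  have "(quartic_integrand a m has_integral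
           (pi / 2) * P_poly m a / (2 * (a + 1)) powr (real m + 1 / 2)) {0..}"
    using quartic_integral_as_trig_integral[OF assms] trig_integral_value[OF assms] by simp
  then show ?thesis
    unfolding quartic_integrand_def using d_coef_pos d_coef_integral by auto
qed

end
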